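(* Let $l\subset[0,1]$ be a compact set and let $f:[0,\infty)\to[0,\infty)$ be a function such that for every $a\in l$, \[ \#\big(W(l,a)\cap[1,N]\big)=o_a(f(N))\quad\text{as }N\to\infty . \] Let $g(x)=\exp\big(-f(1-\log x/\log 2)\big)$ for $x\in(0,1)$, $g(0)=0$. Then $\mathcal{H}^g(l)<\infty$. In particular, if $f(N)=N^{\sigma}$ with $\sigma\in(0,1)$ one may take $g(x)=\exp(-(-\log x)^{\sigma})$, and if $\#(W(l,a)\cap[1,N])=o_a(N)$ for all $a\in l$ then $\dim_{\mathrm H} l=0$.
   Context: For a compact set $l\subset\mathbb{R}$ let $W(l)=\{k\in\mathbb{N}: l\cap([2^{-k-1},2^{-k}]\cup[-2^{-k},-2^{-k-1}])\neq\emptyset\}$, and for $a\in l$ let $W(l,a)=W(l-a)$. For a gauge function $g$, $\mathcal{H}^g(F)=\lim_{\delta\to0}\inf\{\sum_i g(\operatorname{diam}U_i): F\subset\bigcup_iU_i,\ \operatorname{diam}U_i<\delta\}$. *)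

theory Defs
  imports "HOL-Analysis.Analysis" "HOL-Library.Landau_Symbols"
begin

definition W :: "real set \<Rightarrow> nat set" where
  "W l = {k. l \<inter> ({(1/2)^(k+1) .. (1/2)^k} \<union> {-((1/2)^k) .. -((1/2)^(k+1))}) \<noteq> {}}"

definition W_at :: "real set \<Rightarrow> real \<Rightarrow> nat set" where
  "W_at l a = W ((\<lambda>x. x - a) ` l)"

text \<open>Generalized Hausdorff measure with gauge g:
  limit as delta \<rightarrow> 0 (= supremum over delta > 0, the infima being monotone)
  of the infimum over countable covers by bounded sets of diameter < delta.\<close>
definition hausdorff_gauge :: "(real \<Rightarrow> real) \<Rightarrow> real set \<Rightarrow> ennreal" where
  "hausdorff_gauge g F =
     (SUP \<delta>\<in>{0<..}. INF U\<in>{U :: nat \<Rightarrow> real set. F \<subseteq> (\<Union>i. U i) \<and>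
            (\<forall>i. bounded (U i) \<and> diameter (U i) < \<delta>)}.
        (\<Sum>i. ennreal (g (diameter (U i)))))"

definition hausdorff_dim :: "real set \<Rightarrow> real" where
  "hausdorff_dim F = Inf {s. s \<ge> 0 \<and> hausdorff_gauge (\<lambda>x. x powr s) F = 0}"

end

theory Submission
  imports Defs "HOL-Real_Asymp.Real_Asymp"
begin

text \<open>
  If every point of a finite set P of diameter at most 1 sees the rest of P at no more than m
  dyadic scales, then P has at most 5^m points: split P into five pieces of a fifth of its
  diameter; inside a piece each point loses the scale of its farthest point in P.  Applied to a
  maximal 2^-N-separated subset of the points of l whose scale count up to N is at most m, this
  covers that part of l by 5^(m+1) intervals of length 2^(1-N).  When the counts are o(F(N)) and
  g(2^(1-N)) = exp(-F(N)), the cost 5^(m+1) exp(-F(N)) tends to 0, so each part is g-null,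
  and l is a countable union of such parts.
\<close>

lemma mem_W_at_iff:
  "k \<in> W_at l a \<longleftrightarrow> (\<exists>q\<in>l. (1/2)^(k+1) \<le> \<bar>q - a\<bar> \<and> \<bar>q - a\<bar> \<le> (1/2::real)^k)"
proof -
  have "x \<in> {(1/2)^(k+1) .. (1/2)^k} \<union> {-((1/2)^k) .. -((1/2::real)^(k+1))}
        \<longleftrightarrow> (1/2)^(k+1) \<le> \<bar>x\<bar> \<and> \<bar>x\<bar> \<le> (1/2::real)^k" for x
    by (cases "0 \<le> x") auto
  thus ?thesis unfolding W_at_def W_def by blast
qed

lemma W_at_mono: "A \<subseteq> B \<Longrightarrow> W_at A a \<subseteq> W_at B a"
  unfolding W_at_def W_def by blast

lemma dyadic_scale_exists:
  fixes d :: real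
  assumes "0 < d" "d \<le> 1"
  shows "\<exists>k. (1/2)^(k+1) \<le> d \<and> d \<le> (1/2)^k"
proof -
  obtain n where "(1/2::real)^n < d"
    using real_arch_pow_inv[of d "1/2"] assms by auto
  moreover have "(1/2::real)^(n+1) \<le> (1/2)^n"
    by (simp add: power_decreasing)
  ultimately have ex: "(1/2::real)^(n+1) \<le> d"
    by linarith
  define k where "k = (LEAST k. (1/2::real)^(k+1) \<le> d)"
  have low: "(1/2::real)^(k+1) \<le> d"
    unfolding k_def by (rule LeastI[of "\<lambda>k. (1/2::real)^(k+1) \<le> d", OF ex])
  have "d \<le> (1/2)^k"
  proof (cases k)
    case (Suc j)
    have "\<not> (1/2::real)^(j+1) \<le> d"
      using not_less_Least[of j "\<lambda>k. (1/2::real)^(k+1) \<le> d"] Suc k_def by auto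
    thus ?thesis using Suc by simp
  qed (use assms in simp)
  thus ?thesis using low by blast
qed

lemma W_at_nonempty:
  assumes "p \<in> P" "q \<in> P" "p \<noteq> q" "\<bar>q - p\<bar> \<le> 1"
  shows "W_at P p \<noteq> {}"
proof -
  obtain k where "(1/2)^(k+1) \<le> \<bar>q - p\<bar> \<and> \<bar>q - p\<bar> \<le> (1/2::real)^k"
    using dyadic_scale_exists[of "\<bar>q - p\<bar>"] assms by auto
  thus ?thesis using assms(2) mem_W_at_iff by blast
qed

lemma finite_W_at:
  assumes "finite l"
  shows "finite (W_at l a)"
proof -
  have fin: "finite {k. \<bar>q - a\<bar> \<le> (1/2::real)^k}" if qa: "q \<noteq> a" for q
  proof -
    obtain n where n: "(1/2::real)^n < \<bar>q - a\<bar>"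
      using real_arch_pow_inv[of "\<bar>q - a\<bar>" "1/2"] qa by auto
    have "{k. \<bar>q - a\<bar> \<le> (1/2::real)^k} \<subseteq> {..<n}"
    proof
      fix k assume k: "k \<in> {k. \<bar>q - a\<bar> \<le> (1/2::real)^k}"
      show "k \<in> {..<n}"
      proof (rule ccontr)
        assume "k \<notin> {..<n}"
        hence "(1/2::real)^k \<le> (1/2)^n" by (intro power_decreasing) auto
        moreover have "\<bar>q - a\<bar> \<le> (1/2)^k" using k by simp
        ultimately show False using n by linarith
      qed
    qed
    thus ?thesis by (rule finite_subset) simp
  qed
  have "W_at l a \<subseteq> (\<Union>q\<in>l - {a}. {k. \<bar>q - a\<bar> \<le> (1/2::real)^k})"
  proof
    fix k assume "k \<in> W_at l a"
    then obtain q where q: "q \<in> l" "(1/2)^(k+1) \<le> \<bar>q - a\<bar>" "\<bar>q - a\<bar> \<le> (1/2::real)^k"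
      unfolding mem_W_at_iff by blast
    moreover have "0 < \<bar>q - a\<bar>" using q(2) zero_less_power[of "1/2::real" "k+1"] by linarith
    ultimately show "k \<in> (\<Union>q\<in>l - {a}. {k. \<bar>q - a\<bar> \<le> (1/2::real)^k})" by auto
  qed
  moreover have "finite (\<Union>q\<in>l - {a}. {k. \<bar>q - a\<bar> \<le> (1/2::real)^k})"
    using assms fin by auto
  ultimately show ?thesis by (rule finite_subset)
qed

lemma W_at_psubset:
  assumes "A \<subseteq> P" "q \<in> P" "q \<noteq> p" "\<bar>q - p\<bar> \<le> 1" "\<forall>x\<in>A. 2 * \<bar>x - p\<bar> < \<bar>q - p\<bar>"
  shows "W_at A p \<subset> W_at P p"
proof -
  obtain k where k: "(1/2)^(k+1) \<le> \<bar>q - p\<bar>" "\<bar>q - p\<bar> \<le> (1/2::real)^k"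
    using dyadic_scale_exists[of "\<bar>q - p\<bar>"] assms(3,4) by auto
  have "k \<in> W_at P p" using k assms(2) by (auto simp: mem_W_at_iff)
  moreover have "k \<notin> W_at A p"
  proof
    assume "k \<in> W_at A p"
    then obtain x where "x \<in> A" "(1/2)^(k+1) \<le> \<bar>x - p\<bar>"
      by (auto simp: mem_W_at_iff)
    thus False using assms(5) k(2) by fastforce
  qed
  ultimately show ?thesis using W_at_mono[OF assms(1)] by blast
qed

lemma interval_split_index:
  fixes a D x :: real
  assumes "0 < D" "a \<le> x" "x \<le> a + D" "0 < n"
  shows "\<exists>i<n. a + real i * D / n \<le> x \<and> x \<le> a + (real i + 1) * D / n"
proof -
  define t where "t = (x - a) * n / D"
  have "(x - a) * n \<le> D * n" using assms by (intro mult_right_mono) auto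
  hence t: "0 \<le> t" "t \<le> n" using assms unfolding t_def by (auto simp: field_simps)
  define i where "i = min (n - 1) (nat \<lfloor>t\<rfloor>)"
  have "real i \<le> t" "t \<le> real i + 1" "i < n"
    using t assms(4) unfolding i_def by (auto simp: min_def of_nat_diff) linarith+
  moreover have "x = a + t * D / n" using assms unfolding t_def by (simp add: field_simps)
  ultimately show ?thesis using assms
    by (intro exI[of _ i]) (auto simp: divide_right_mono mult_right_mono)
qed

lemma card_W_at_less_if_small_piece:
  assumes "finite P" "A \<subseteq> P" "p \<in> A" "a \<in> P" "b \<in> P" "\<forall>x\<in>P. a \<le> x \<and> x \<le> b"
    and "a < b" "b - a \<le> 1" "\<forall>x\<in>A. 5 * \<bar>x - p\<bar> \<le> b - a"
  shows "card (W_at A p) < card (W_at P p)"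
proof -
  have p: "a \<le> p" "p \<le> b" using assms(2,3,6) by auto
  obtain q where q: "q \<in> P" "b - a \<le> 2 * \<bar>q - p\<bar>" "\<bar>q - p\<bar> \<le> 1"
  proof (cases "b - a \<le> 2 * (p - a)")
    case True thus ?thesis using that[of a] assms(4,8) p by auto
  next
    case False thus ?thesis using that[of b] assms(5,8) p by auto
  qed
  have "W_at A p \<subset> W_at P p"
  proof (rule W_at_psubset[OF assms(2) q(1) _ q(3)])
    show "q \<noteq> p" using q(2) assms(7) by auto
    show "\<forall>x\<in>A. 2 * \<bar>x - p\<bar> < \<bar>q - p\<bar>" using assms(7,9) q(2) by fastforce
  qed
  thus ?thesis using finite_W_at[OF assms(1)] by (rule psubset_card_mono[rotated])
qed

lemma card_le_five_pow_if_few_scales: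
  fixes P :: "real set"
  assumes "finite P" "\<forall>p\<in>P. \<forall>q\<in>P. \<bar>p - q\<bar> \<le> 1" "\<forall>p\<in>P. card (W_at P p) \<le> m"
  shows "card P \<le> 5^m"
  using assms
proof (induction m arbitrary: P)
  case 0
  have "card P \<le> 1"
  proof (rule ccontr)
    assume "\<not> card P \<le> 1"
    then obtain p q where "p \<in> P" "q \<in> P" "p \<noteq> q"
      using "0.prems"(1) by (auto simp: card_le_Suc0_iff_eq)
    hence "W_at P p \<noteq> {}" using W_at_nonempty "0.prems"(2) by blast
    thus False using \<open>p \<in> P\<close> "0.prems" finite_W_at by fastforce
  qed
  thus ?case by simp
next
  case (Suc m)
  show ?case
  proof (cases "card P \<le> 1")
    case True thus ?thesis by (metis le_trans one_le_numeral one_le_power)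
  next
    case False
    then obtain p q where pq: "p \<in> P" "q \<in> P" "p \<noteq> q"
      using Suc.prems(1) by (auto simp: card_le_Suc0_iff_eq)
    define a where "a = Min P"
    define b where "b = Max P"
    have ab: "a \<in> P" "b \<in> P" "\<forall>x\<in>P. a \<le> x \<and> x \<le> b"
      using Suc.prems(1) pq(1) unfolding a_def b_def by (auto intro: Min_in Max_in)
    have "a \<le> p" "p \<le> b" "a \<le> q" "q \<le> b" using ab(3) pq by auto
    hence "a < b" using pq(3) by linarith
    define A where "A i = {x\<in>P. a + real i * (b - a) / 5 \<le> x \<and> x \<le> a + (real i + 1) * (b - a) / 5}"
      for i :: nat
    have "P = (\<Union>i<5. A i)"
    proof (intro equalityI subsetI)
      fix x assume "x \<in> P"
      then obtain i where "i < 5" "a + real i * (b - a) / 5 \<le> x" "x \<le> a + (real i + 1) * (b - a) / 5"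
        using interval_split_index[of "b - a" a x 5] \<open>a < b\<close> ab(3) by auto
      thus "x \<in> (\<Union>i<5. A i)" using \<open>x \<in> P\<close> unfolding A_def by blast
    qed (auto simp: A_def)
    hence "card P \<le> (\<Sum>i<5. card (A i))"
      using card_UN_le[of "{..<5::nat}" A] by simp
    also have "\<dots> \<le> (\<Sum>i<5::nat. 5^m)"
    proof (intro sum_mono Suc.IH)
      fix i
      have sub: "A i \<subseteq> P" unfolding A_def by blast
      show "finite (A i)" using sub Suc.prems(1) by (rule finite_subset)
      show "\<forall>x\<in>A i. \<forall>y\<in>A i. \<bar>x - y\<bar> \<le> 1" using sub Suc.prems(2) by blast
      have "card (W_at (A i) x) < card (W_at P x)" if "x \<in> A i" for x
      proof (rule card_W_at_less_if_small_piece[OF Suc.prems(1) sub that ab \<open>a < b\<close>])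
        show "b - a \<le> 1" using Suc.prems(2) ab by fastforce
        show "\<forall>y\<in>A i. 5 * \<bar>y - x\<bar> \<le> b - a"
          using that unfolding A_def by (auto simp: field_simps split: abs_split)
      qed
      thus "\<forall>x\<in>A i. card (W_at (A i) x) \<le> m" using Suc.prems(3) sub by fastforce
    qed
    also have "\<dots> = 5 ^ Suc m" by simp
    finally show ?thesis .
  qed
qed

lemma W_at_separated_subset:
  assumes "P \<subseteq> l" "\<forall>q\<in>P. q \<noteq> p \<longrightarrow> (1/2)^N < \<bar>q - p\<bar>"
  shows "W_at P p \<subseteq> insert 0 (W_at l p \<inter> {1..N})"
proof
  fix k assume k: "k \<in> W_at P p"
  then obtain q where q: "q \<in> P" "(1/2)^(k+1) \<le> \<bar>q - p\<bar>" "\<bar>q - p\<bar> \<le> (1/2::real)^k"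
    unfolding mem_W_at_iff by blast
  have "0 < \<bar>q - p\<bar>" using q(2) zero_less_power[of "1/2::real" "k+1"] by linarith
  hence "q \<noteq> p" by auto
  hence "(1/2::real)^N < \<bar>q - p\<bar>" using assms(2) q(1) by blast
  hence "(1/2::real)^N < (1/2)^k" using q(3) by linarith
  hence "k < N" using power_strict_decreasing_iff[of "1/2::real" N k] by simp
  moreover have "k \<in> W_at l p" using W_at_mono[OF assms(1)] k by blast
  ultimately show "k \<in> insert 0 (W_at l p \<inter> {1..N})" by (cases k) auto
qed

lemma card_separated_le:
  assumes "P \<subseteq> E" "E \<subseteq> l" "l \<subseteq> {0..1}" "finite P" "\<forall>a\<in>E. card (W_at l a \<inter> {1..N}) \<le> m"
    and "\<forall>p\<in>P. \<forall>q\<in>P. q \<noteq> p \<longrightarrow> (1/2)^N < \<bar>q - p\<bar>"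
  shows "card P \<le> 5^(m+1)"
proof (rule card_le_five_pow_if_few_scales[OF assms(4)])
  show "\<forall>p\<in>P. \<forall>q\<in>P. \<bar>p - q\<bar> \<le> 1"
  proof (intro ballI)
    fix p q assume "p \<in> P" "q \<in> P"
    hence "p \<in> {0..1}" "q \<in> {0..1}" using assms(1-3) by blast+
    thus "\<bar>p - q\<bar> \<le> 1" by (auto simp: abs_le_iff)
  qed
  show "\<forall>p\<in>P. card (W_at P p) \<le> m + 1"
  proof
    fix p assume p: "p \<in> P"
    have "card (W_at P p) \<le> card (insert 0 (W_at l p \<inter> {1..N}))"
      using W_at_separated_subset[of P l p N] assms(1,2,6) p by (intro card_mono) auto
    also have "\<dots> \<le> m + 1" using card_insert_le_m1 assms(1,5) p
      by (metis Suc_eq_plus1 card_insert_if finite_Int finite_atLeastAtMost le_SucI subsetD Suc_le_mono)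
    finally show "card (W_at P p) \<le> m + 1" .
  qed
qed

lemma dyadic_net_cover:
  assumes "E \<subseteq> l" "l \<subseteq> {0..1}" "\<forall>a\<in>E. card (W_at l a \<inter> {1..N}) \<le> m"
  shows "\<exists>C. finite C \<and> card C \<le> 5^(m+1) \<and> E \<subseteq> (\<Union>c\<in>C. {c - (1/2)^N .. c + (1/2)^N})"
proof -
  define net where "net P \<longleftrightarrow> P \<subseteq> E \<and> finite P \<and> (\<forall>p\<in>P. \<forall>q\<in>P. q \<noteq> p \<longrightarrow> (1/2::real)^N < \<bar>q - p\<bar>)"
    for P
  have bound: "card P \<le> 5^(m+1)" if "net P" for P
    using card_separated_le[OF _ assms(1,2) _ assms(3)] that unfolding net_def by blast
  obtain C where C: "net C" and max: "\<And>P. net P \<Longrightarrow> card P \<le> card C"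
    using ex_has_greatest_nat[of net "{}" card "5^(m+1) + 1"] bound
    unfolding net_def by (auto simp: le_imp_less_Suc)
  have "\<exists>c\<in>C. \<bar>e - c\<bar> \<le> (1/2)^N" if e: "e \<in> E" for e
  proof (rule ccontr)
    assume far: "\<not> (\<exists>c\<in>C. \<bar>e - c\<bar> \<le> (1/2)^N)"
    hence "e \<notin> C" by force
    moreover have "net (insert e C)" using C e far unfolding net_def by (auto simp: abs_minus_commute)
    ultimately show False using max[of "insert e C"] C unfolding net_def by simp
  qed
  hence "E \<subseteq> (\<Union>c\<in>C. {c - (1/2)^N .. c + (1/2)^N})" by (fastforce simp: abs_le_iff)
  thus ?thesis using C bound unfolding net_def by blast
qed

definition hausdorff_content :: "(real \<Rightarrow> real) \<Rightarrow> real \<Rightarrow> real set \<Rightarrow> ennreal" where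
  "hausdorff_content g \<delta> F =
     (INF U\<in>{U. F \<subseteq> (\<Union>i. U i) \<and> (\<forall>i. bounded (U i) \<and> diameter (U i) < \<delta>)}.
        \<Sum>i. ennreal (g (diameter (U i))))"

lemma hausdorff_gauge_eq_SUP_content:
  "hausdorff_gauge g F = (SUP \<delta>\<in>{0<..}. hausdorff_content g \<delta> F)"
  unfolding hausdorff_gauge_def hausdorff_content_def ..

lemma hausdorff_content_le_cover:
  assumes "F \<subseteq> (\<Union>i. U i)" "\<And>i. bounded (U i)" "\<And>i. diameter (U i) < \<delta>"
  shows "hausdorff_content g \<delta> F \<le> (\<Sum>i. ennreal (g (diameter (U i))))"
  unfolding hausdorff_content_def using assms by (intro INF_lower) auto

lemma hausdorff_gauge_le_interval_covers:
  assumes "g 0 = 0"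
    and "\<And>\<delta>. \<delta> > 0 \<Longrightarrow> \<exists>C h. finite C \<and> F \<subseteq> (\<Union>c\<in>C. {c - h .. c + h}) \<and> 0 < h \<and> 2 * h < \<delta> \<and>
               of_nat (card C) * ennreal (g (2 * h)) \<le> B"
  shows "hausdorff_gauge g F \<le> B"
  unfolding hausdorff_gauge_eq_SUP_content
proof (rule SUP_least)
  fix \<delta> :: real assume "\<delta> \<in> {0<..}"
  then obtain C h where C: "finite C" "F \<subseteq> (\<Union>c\<in>C. {c - h .. c + h})" "0 < h" "2 * h < \<delta>"
      "of_nat (card C) * ennreal (g (2 * h)) \<le> B"
    using assms(2) by force
  obtain e where e: "bij_betw e {..<card C} C"
    using ex_bij_betw_nat_finite[OF C(1)] atLeast0LessThan by auto
  define U where "U i = (if i < card C then {e i - h .. e i + h} else {})" for i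
  have diam: "diameter (U i) = (if i < card C then 2 * h else 0)" for i
    unfolding U_def using C(3) by auto
  have "F \<subseteq> (\<Union>i. U i)"
    using C(2) e unfolding U_def bij_betw_def by force
  hence "hausdorff_content g \<delta> F \<le> (\<Sum>i. ennreal (g (diameter (U i))))"
    by (rule hausdorff_content_le_cover) (use diam C(3,4) in \<open>auto simp: U_def\<close>)
  also have "\<dots> = (\<Sum>i<card C. ennreal (g (diameter (U i))))"
    by (rule suminf_finite) (auto simp: diam assms(1))
  also have "\<dots> = of_nat (card C) * ennreal (g (2 * h))"
    by (simp add: diam)
  finally show "hausdorff_content g \<delta> F \<le> B" using C(5) by simp
qed

lemma hausdorff_gauge_Union_null:
  fixes E :: "nat \<Rightarrow> real set"
  assumes "\<And>M. hausdorff_gauge g (E M) = 0"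
  shows "hausdorff_gauge g (\<Union>M. E M) = 0"
proof -
  have small: "hausdorff_content g \<delta> (\<Union>M. E M) \<le> \<epsilon>" if "0 < \<delta>" "0 < \<epsilon>" for \<delta> \<epsilon> :: real
  proof -
    have "\<forall>M. \<exists>U. E M \<subseteq> (\<Union>i. U i) \<and> (\<forall>i. bounded (U i) \<and> diameter (U i) < \<delta>) \<and>
              (\<Sum>i. ennreal (g (diameter (U i)))) < ennreal (\<epsilon> * (1/2)^Suc M)"
    proof
      fix M
      have "hausdorff_content g \<delta> (E M) \<le> hausdorff_gauge g (E M)"
        unfolding hausdorff_gauge_eq_SUP_content using that(1) by (intro SUP_upper) auto
      hence "hausdorff_content g \<delta> (E M) < ennreal (\<epsilon> * (1/2)^Suc M)"
        using assms that(2) by simp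
      thus "\<exists>U. E M \<subseteq> (\<Union>i. U i) \<and> (\<forall>i. bounded (U i) \<and> diameter (U i) < \<delta>) \<and>
              (\<Sum>i. ennreal (g (diameter (U i)))) < ennreal (\<epsilon> * (1/2)^Suc M)"
        unfolding hausdorff_content_def INF_less_iff by blast
    qed
    then obtain UU where UU: "\<And>M. E M \<subseteq> (\<Union>i. UU M i)" "\<And>M i. bounded (UU M i)"
        "\<And>M i. diameter (UU M i) < \<delta>"
        "\<And>M. (\<Sum>i. ennreal (g (diameter (UU M i)))) < ennreal (\<epsilon> * (1/2)^Suc M)"
      by metis
    define V where "V n = UU (fst (prod_decode n)) (snd (prod_decode n))" for n
    have "(\<Union>M. E M) \<subseteq> (\<Union>n. V n)"
    proof
      fix x assume "x \<in> (\<Union>M. E M)"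
      then obtain M i where "x \<in> UU M i" using UU(1) by blast
      hence "x \<in> V (prod_encode (M, i))" unfolding V_def by simp
      thus "x \<in> (\<Union>n. V n)" by blast
    qed
    hence "hausdorff_content g \<delta> (\<Union>M. E M) \<le> (\<Sum>n. ennreal (g (diameter (V n))))"
      by (rule hausdorff_content_le_cover) (auto simp: V_def UU(2,3))
    also have "\<dots> = (\<Sum>M. \<Sum>i. ennreal (g (diameter (UU M i))))"
      unfolding V_def using suminf_ennreal_2dimen[of "\<lambda>M. \<Sum>i. ennreal (g (diameter (UU M i)))"
          "\<lambda>p. ennreal (g (diameter (UU (fst p) (snd p))))"]
      by (simp add: case_prod_beta)
    also have "\<dots> \<le> (\<Sum>M. ennreal (\<epsilon> * (1/2)^Suc M))"
      by (intro suminf_le summableI less_imp_le UU(4))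
    also have "\<dots> = ennreal (\<Sum>M. \<epsilon> * (1/2)^Suc M)"
      by (rule suminf_ennreal2) (use that in \<open>auto intro!: summable_mult summable_geometric\<close>)
    also have "(\<Sum>M. \<epsilon> * (1/2::real)^Suc M) = \<epsilon>"
      using sums_mult[OF power_half_series, of \<epsilon>] by (simp add: sums_iff)
    finally show ?thesis .
  qed
  have "hausdorff_content g \<delta> (\<Union>M. E M) \<le> 0" if "0 < \<delta>" for \<delta>
    by (rule ennreal_le_epsilon) (use small that in simp)
  thus ?thesis unfolding hausdorff_gauge_eq_SUP_content by (simp add: SUP_constant)
qed

lemma of_nat_mult_ennreal_le:
  assumes "n \<le> k" "real k * x \<le> B"
  shows "of_nat n * ennreal x \<le> ennreal B"
proof (cases "0 \<le> x")
  case True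
  have "of_nat n * ennreal x = ennreal (real n * x)"
    using True by (simp add: ennreal_mult' ennreal_of_nat_eq_real_of_nat)
  also have "real n * x \<le> real k * x"
    using assms(1) True by (intro mult_right_mono) auto
  hence "ennreal (real n * x) \<le> ennreal B"
    using assms(2) by (intro ennreal_leI) linarith
  finally show ?thesis .
qed (simp add: ennreal_neg)

lemma hausdorff_gauge_le_if_scale_counts:
  assumes "E \<subseteq> l" "l \<subseteq> {0..1}" "g 0 = 0"
    and "\<And>\<delta>::real. \<delta> > 0 \<Longrightarrow> \<exists>N m. 2 * (1/2)^N < \<delta> \<and> (\<forall>a\<in>E. card (W_at l a \<inter> {1..N}) \<le> m) \<and>
                        5^(m+1) * g (2 * (1/2)^N) \<le> B"
  shows "hausdorff_gauge g E \<le> ennreal B"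
proof (rule hausdorff_gauge_le_interval_covers[where g = g, OF assms(3)])
  fix \<delta> :: real assume "\<delta> > 0"
  then obtain N m where N: "2 * (1/2)^N < \<delta>" "\<forall>a\<in>E. card (W_at l a \<inter> {1..N}) \<le> m"
      "5^(m+1) * g (2 * (1/2)^N) \<le> B"
    using assms(4) by blast
  obtain C where C: "finite C" "card C \<le> 5^(m+1)" "E \<subseteq> (\<Union>c\<in>C. {c - (1/2)^N .. c + (1/2)^N})"
    using dyadic_net_cover[OF assms(1,2) N(2)] by blast
  have "of_nat (card C) * ennreal (g (2 * (1/2)^N)) \<le> ennreal B"
    using C(2) N(3) by (intro of_nat_mult_ennreal_le) auto
  thus "\<exists>C h. finite C \<and> E \<subseteq> (\<Union>c\<in>C. {c - h .. c + h}) \<and> 0 < h \<and> 2 * h < \<delta> \<and>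
          of_nat (card C) * ennreal (g (2 * h)) \<le> ennreal B"
    using C N by (intro exI[of _ C] exI[of _ "(1/2)^N"]) auto
qed

lemma eventually_two_half_pow_less:
  assumes "\<delta> > 0"
  shows "eventually (\<lambda>N. 2 * (1/2::real)^N < \<delta>) sequentially"
proof -
  have "(\<lambda>N. 2 * (1/2::real)^N) \<longlonglongrightarrow> 0" by real_asymp
  thus ?thesis using assms by (rule order_tendstoD)
qed

lemma five_pow_exp_le:
  fixes F \<eta> :: real
  assumes "real m \<le> F / (2 * ln 5)" "2 * ln (5 / \<eta>) \<le> F" "0 < \<eta>"
  shows "5^(m+1) * exp (- F) \<le> \<eta>"
proof -
  have "(5::real)^(m+1) = 5 * exp (real m * ln 5)"
    by (simp add: exp_of_nat_mult)
  also have "\<dots> \<le> 5 * exp (F / 2)"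
    using assms(1) by (simp add: field_simps)
  finally have "5^(m+1) * exp (- F) \<le> 5 * exp (F / 2) * exp (- F)" by simp
  also have "\<dots> = 5 * exp (- (F / 2))"
    by (simp add: mult.assoc exp_add[symmetric])
  also have "\<dots> \<le> 5 * exp (- ln (5 / \<eta>))" using assms(2) by simp
  also have "\<dots> = \<eta>" using assms(3) by (simp add: exp_minus)
  finally show ?thesis .
qed

lemma hausdorff_gauge_null_if_smallo:
  fixes F :: "nat \<Rightarrow> real"
  assumes l: "l \<subseteq> {0..1}" and "g 0 = 0"
    and gauge: "\<forall>N\<ge>2. g (2 * (1/2)^N) = exp (- F N)"
    and F: "filterlim F at_top sequentially"
    and count: "\<forall>a\<in>l. (\<lambda>N. real (card (W_at l a \<inter> {1..N}))) \<in> o(F)"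
  shows "hausdorff_gauge g l = 0"
proof -
  \<comment> \<open>With counts at most F N / (2 ln 5), the covers cost 5^(m+1) exp(-F N) \<le> 5 exp(-F N / 2).\<close>
  define L where "L = 2 * ln (5::real)"
  have "L > 0" unfolding L_def by simp
  define E where "E M = {a\<in>l. \<forall>N\<ge>M. real (card (W_at l a \<inter> {1..N})) \<le> F N / L}" for M
  have F_ge: "eventually (\<lambda>N. Z \<le> F N) sequentially" for Z
    using F unfolding filterlim_at_top by blast
  have "l \<subseteq> (\<Union>M. E M)"
  proof
    fix a assume a: "a \<in> l"
    have "eventually (\<lambda>N. \<bar>real (card (W_at l a \<inter> {1..N}))\<bar> \<le> (1/L) * \<bar>F N\<bar>) sequentially"
      using landau_o.smallD[OF count[rule_format, OF a], of "1/L"] \<open>L > 0\<close> by simp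
    hence "eventually (\<lambda>N. real (card (W_at l a \<inter> {1..N})) \<le> F N / L) sequentially"
      using F_ge[of 0] by eventually_elim simp
    thus "a \<in> (\<Union>M. E M)" using a unfolding E_def eventually_sequentially by blast
  qed
  hence "l = (\<Union>M. E M)" unfolding E_def by blast
  moreover have "hausdorff_gauge g (E M) = 0" for M
  proof -
    have eps: "hausdorff_gauge g (E M) \<le> ennreal \<eta>" if "0 < \<eta>" for \<eta>
    proof (rule hausdorff_gauge_le_if_scale_counts[where g = g, OF _ l \<open>g 0 = 0\<close>])
      show "E M \<subseteq> l" unfolding E_def by blast
      fix \<delta> :: real assume "\<delta> > 0"
      obtain N where N: "2 * (1/2)^N < \<delta>" "2 \<le> N" "M \<le> N" "0 \<le> F N" "2 * ln (5 / \<eta>) \<le> F N"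
        using eventually_conj[OF eventually_two_half_pow_less[OF \<open>\<delta> > 0\<close>]
            eventually_conj[OF eventually_ge_at_top[of "max 2 M"] F_ge[of "max 0 (2 * ln (5 / \<eta>))"]]]
        unfolding eventually_sequentially by auto
      define m where "m = nat \<lfloor>F N / L\<rfloor>"
      have "\<forall>a\<in>E M. card (W_at l a \<inter> {1..N}) \<le> m"
        using N(3) unfolding E_def m_def by (auto simp: le_nat_floor)
      moreover have "5^(m+1) * g (2 * (1/2)^N) \<le> \<eta>"
        using five_pow_exp_le[of m "F N" \<eta>] N(2,4,5) \<open>L > 0\<close> gauge \<open>0 < \<eta>\<close>
        unfolding m_def L_def by simp
      ultimately show "\<exists>N m. 2 * (1/2)^N < \<delta> \<and> (\<forall>a\<in>E M. card (W_at l a \<inter> {1..N}) \<le> m) \<and>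
                        5^(m+1) * g (2 * (1/2)^N) \<le> \<eta>"
        using N(1) by blast
    qed
    have "hausdorff_gauge g (E M) \<le> 0"
      by (rule ennreal_le_epsilon) (use eps in simp)
    thus ?thesis by simp
  qed
  ultimately show ?thesis using hausdorff_gauge_Union_null by metis
qed

lemma filterlim_at_top_if_smallo:
  fixes u F :: "nat \<Rightarrow> real"
  assumes "u \<in> o(F)" "eventually (\<lambda>N. 1 \<le> u N) sequentially" "\<forall>N. 0 \<le> F N"
  shows "filterlim F at_top sequentially"
  unfolding filterlim_at_top
proof
  fix Z :: real
  have "eventually (\<lambda>N. \<bar>u N\<bar> \<le> (1 / max Z 1) * \<bar>F N\<bar>) sequentially"
    using landau_o.smallD[OF assms(1), of "1 / max Z 1"] by simp
  thus "eventually (\<lambda>N. Z \<le> F N) sequentially"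
    using assms(2)
  proof eventually_elim
    case (elim N)
    hence "max Z 1 \<le> u N * max Z 1" by (intro mult_le_cancel_right1[THEN iffD2]) auto
    also have "\<dots> \<le> F N" using elim assms(3) by (simp add: field_simps)
    finally show ?case by simp
  qed
qed

lemma hausdorff_gauge_finite_if_smallo:
  fixes F :: "nat \<Rightarrow> real"
  assumes l: "l \<subseteq> {0..1}" and "g 0 = 0"
    and gauge: "\<forall>N\<ge>2. g (2 * (1/2)^N) = exp (- F N)" and F_nonneg: "\<forall>N. 0 \<le> F N"
    and count: "\<forall>a\<in>l. (\<lambda>N. real (card (W_at l a \<inter> {1..N}))) \<in> o(F)"
  shows "hausdorff_gauge g l < \<infinity>"
proof (cases "\<forall>a\<in>l. W_at l a \<subseteq> {0}")
  \<comment> \<open>Then F need not tend to infinity, but covers with m = 0 still cost at most 5.\<close>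
  case True
  have "hausdorff_gauge g l \<le> ennreal 5"
  proof (rule hausdorff_gauge_le_if_scale_counts[where g = g, OF subset_refl l \<open>g 0 = 0\<close>])
    fix \<delta> :: real assume "\<delta> > 0"
    obtain N where N: "2 * (1/2)^N < \<delta>" "2 \<le> N"
      using eventually_conj[OF eventually_two_half_pow_less[OF \<open>\<delta> > 0\<close>] eventually_ge_at_top[of 2]]
      unfolding eventually_sequentially by auto
    have "\<forall>a\<in>l. card (W_at l a \<inter> {1..N}) \<le> 0" using True by fastforce
    moreover have "5^(0+1) * g (2 * (1/2)^N) \<le> 5" using gauge F_nonneg N(2) by simp
    ultimately show "\<exists>N m. 2 * (1/2)^N < \<delta> \<and> (\<forall>a\<in>l. card (W_at l a \<inter> {1..N}) \<le> m) \<and>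
                      5^(m+1) * g (2 * (1/2)^N) \<le> 5"
      using N(1) by blast
  qed
  thus ?thesis using le_less_trans by fastforce
next
  case False
  then obtain a k where a: "a \<in> l" "k \<in> W_at l a" "k \<noteq> 0" by blast
  have "eventually (\<lambda>N. 1 \<le> real (card (W_at l a \<inter> {1..N}))) sequentially"
    using eventually_ge_at_top[of k]
  proof eventually_elim
    case (elim N)
    hence "k \<in> W_at l a \<inter> {1..N}" using a by auto
    hence "0 < card (W_at l a \<inter> {1..N})" by (auto simp: card_gt_0_iff)
    thus ?case by simp
  qed
  hence "filterlim F at_top sequentially"
    using filterlim_at_top_if_smallo count a(1) F_nonneg by blast
  hence "hausdorff_gauge g l = 0"
    using hausdorff_gauge_null_if_smallo[OF l \<open>g 0 = 0\<close> gauge _ count] by blast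
  thus ?thesis by simp
qed

lemma two_half_pow_in_unit: "2 \<le> N \<Longrightarrow> 2 * (1/2::real)^N \<in> {0<..<1}"
  using power_strict_decreasing[of 1 N "1/2::real"] by auto

lemma ln_two_half_pow: "ln (2 * (1/2::real)^N) = (1 - real N) * ln 2"
  by (simp add: ln_mult ln_realpow ln_div algebra_simps)

lemma Inf_nonneg_eq_zero:
  assumes "\<And>s::real. 0 < s \<Longrightarrow> P s"
  shows "Inf {s. 0 \<le> s \<and> P s} = 0"
proof (cases "P 0")
  case True
  hence "{s. 0 \<le> s \<and> P s} = {0..}" using assms by (auto simp: le_less)
  thus ?thesis by simp
next
  case False
  hence "{s. 0 \<le> s \<and> P s} = {0<..}" using assms by (auto simp: le_less)
  thus ?thesis by simp
qed

lemma hausdorff_gauge_powr_null_if_smallo: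
  assumes l: "l \<subseteq> {0..1}" and "0 < s"
    and count: "\<forall>a\<in>l. (\<lambda>N. real (card (W_at l a \<inter> {1..N}))) \<in> o(\<lambda>N. real N)"
  shows "hausdorff_gauge (\<lambda>x. x powr s) l = 0"
proof (rule hausdorff_gauge_null_if_smallo[OF l])
  define F where "F N = s * (real N - 1) * ln 2" for N :: nat
  show "\<forall>N\<ge>2. (2 * (1/2)^N) powr s = exp (- F N)"
    using two_half_pow_in_unit by (simp add: powr_def ln_two_half_pow F_def algebra_simps)
  show "filterlim F at_top sequentially" unfolding F_def using \<open>0 < s\<close> by real_asymp
  have "(\<lambda>N. real N) \<in> O(F)" unfolding F_def using \<open>0 < s\<close> by real_asymp
  thus "\<forall>a\<in>l. (\<lambda>N. real (card (W_at l a \<inter> {1..N}))) \<in> o(F)"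
    using count landau_o.small_big_trans by blast
qed simp

theorem proposition4p3:
  fixes l :: "real set"
  assumes "compact l" and "l \<subseteq> {0..1}"
  shows
    "(\<forall>(f :: real \<Rightarrow> real) (g :: real \<Rightarrow> real).
        (\<forall>x\<ge>0. f x \<ge> 0) \<longrightarrow>
        (\<forall>a\<in>l. (\<lambda>N::nat. real (card (W_at l a \<inter> {1..N}))) \<in> o(\<lambda>N. f (real N))) \<longrightarrow>
        (\<forall>x\<in>{0<..<1}. g x = exp (- f (1 - ln x / ln 2))) \<longrightarrow> g 0 = 0 \<longrightarrow>
        hausdorff_gauge g l < \<infinity>)
   \<and> (\<forall>(\<sigma> :: real) (g :: real \<Rightarrow> real).
        0 < \<sigma> \<longrightarrow> \<sigma> < 1 \<longrightarrow>
        (\<forall>a\<in>l. (\<lambda>N::nat. real (card (W_at l a \<inter> {1..N}))) \<in> o(\<lambda>N. real N powr \<sigma>)) \<longrightarrow>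
        (\<forall>x\<in>{0<..<1}. g x = exp (- ((- ln x) powr \<sigma>))) \<longrightarrow> g 0 = 0 \<longrightarrow>
        hausdorff_gauge g l < \<infinity>)
   \<and> ((\<forall>a\<in>l. (\<lambda>N::nat. real (card (W_at l a \<inter> {1..N}))) \<in> o(\<lambda>N. real N)) \<longrightarrow>
        hausdorff_dim l = 0)"
proof (intro conjI allI impI)
  fix f g :: "real \<Rightarrow> real"
  assume "\<forall>x\<ge>0. f x \<ge> 0" "\<forall>a\<in>l. (\<lambda>N::nat. real (card (W_at l a \<inter> {1..N}))) \<in> o(\<lambda>N. f (real N))"
    and g: "\<forall>x\<in>{0<..<1}. g x = exp (- f (1 - ln x / ln 2))" and "g 0 = 0"
  moreover have "\<forall>N\<ge>2. g (2 * (1/2)^N) = exp (- f (real N))"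
    using g two_half_pow_in_unit by (simp add: ln_two_half_pow)
  ultimately show "hausdorff_gauge g l < \<infinity>"
    using hausdorff_gauge_finite_if_smallo[OF assms(2), of g "\<lambda>N. f (real N)"] by simp
next
  fix \<sigma> :: real and g :: "real \<Rightarrow> real"
  assume "0 < \<sigma>" "\<sigma> < 1"
    and count: "\<forall>a\<in>l. (\<lambda>N::nat. real (card (W_at l a \<inter> {1..N}))) \<in> o(\<lambda>N. real N powr \<sigma>)"
    and g: "\<forall>x\<in>{0<..<1}. g x = exp (- ((- ln x) powr \<sigma>))" and "g 0 = 0"
  define F where "F N = ((real N - 1) * ln 2) powr \<sigma>" for N :: nat
  show "hausdorff_gauge g l < \<infinity>"
  proof (rule hausdorff_gauge_finite_if_smallo[where g = g and F = F, OF assms(2) \<open>g 0 = 0\<close>])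
    show "\<forall>N\<ge>2. g (2 * (1/2)^N) = exp (- F N)"
      using g two_half_pow_in_unit by (simp add: ln_two_half_pow F_def algebra_simps)
    have "(\<lambda>N. real N powr \<sigma>) \<in> O(F)" unfolding F_def using \<open>0 < \<sigma>\<close> by real_asymp
    thus "\<forall>a\<in>l. (\<lambda>N. real (card (W_at l a \<inter> {1..N}))) \<in> o(F)"
      using count landau_o.small_big_trans by blast
  qed (simp add: F_def)
next
  assume "\<forall>a\<in>l. (\<lambda>N::nat. real (card (W_at l a \<inter> {1..N}))) \<in> o(\<lambda>N. real N)"
  thus "hausdorff_dim l = 0"
    unfolding hausdorff_dim_def using hausdorff_gauge_powr_null_if_smallo[OF assms(2)]
    by (intro Inf_nonneg_eq_zero) blast
qed

end
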